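(* Under Assumptions 1–2, assume $r_\ell<\min\{m_\ell,n_\ell\}$ for all $\ell$ and $\Delta>0$. Let $T$ be an integer with $T\ge 64/(3\underline{\delta})$ and choose $\beta_1=1$, $\tau=\lceil 64/(3\underline{\delta}\beta_1)\rceil$, and $\eta=\Big(4L+\sqrt{\tfrac{80L^2}{3\underline{\delta}\beta_1^2}}+\sqrt{\tfrac{80\tau^2L^2}{3\underline{\delta}}}+\sqrt{\tfrac{16\tau L^2}{3\beta_1}}\Big)^{-1}$. Then GaLore using deterministic gradients and MSGD with momentum projection satisfies $\frac1T\sum_{t=0}^{T-1}\|\nabla f(x^{(t)})\|_2^2\le C\,\frac{L\Delta}{\underline{\delta}^{5/2}T}$ for an absolute constant $C$.
   Context: Parameters $x=(\mathrm{vec}(X_1)^\top,\dots,\mathrm{vec}(X_{N_L})^\top)^\top\in\mathbb{R}^d$, $X_\ell\in\mathbb{R}^{m_\ell\times n_\ell}$; $\nabla_\ell$ is the gradient w.r.t. $X_\ell$. Assumption 1: $\inf f>-\infty$. Assumption 2: $\nabla f$ is $L$-Lipschitz in $\|\cdot\|_2$. $\Delta=f(x^{(0)})-\inf_x f(x)$, $\delta_\ell=r_\ell/\min\{m_\ell,n_\ell\}$, $\underline\delta=\min_\ell\delta_\ell$. Algorithm (GaLore/GoLore with MSGD and momentum projection, "MP"): inputs $x^{(0)}$, $\eta>0$, integer $\tau\ge1$, $\beta_1\in(0,1]$, ranks $r_\ell$; $M_\ell^{(-1)}=0$. For $t=0,\dots,T-1$ and each $\ell$: obtain a gradient matrix $G_\ell^{(t)}$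 (variant-dependent). If $t\equiv0\pmod\tau$, choose new $P_\ell^{(t)}\in\mathbb{R}^{m_\ell\times r_\ell}$, $Q_\ell^{(t)}\in\mathbb{R}^{n_\ell\times r_\ell}$: in GaLore take an SVD $G_\ell^{(t)}=U\Sigma V^\top$ (singular values nonincreasing) and $P_\ell^{(t)}=U[:,:r_\ell]$, $Q_\ell^{(t)}=V[:,:r_\ell]$; in GoLore sample $P_\ell^{(t)}$, $Q_\ell^{(t)}$ uniformly (Haar) from the Stiefel manifolds $\mathrm{St}_{m_\ell,r_\ell}$, $\mathrm{St}_{n_\ell,r_\ell}$ (where $\mathrm{St}_{m,r}=\{P\in\mathbb{R}^{m\times r}:P^\top P=I_r\}$), independently of everything else. Otherwise $P_\ell^{(t)}=P_\ell^{(t-1)}$, $Q_\ell^{(t)}=Q_\ell^{(t-1)}$. If $m_\ell\le n_\ell$: $M_\ell^{(t)}=(1-\beta_1)(P_\ell^{(t)})^\top P_\ell^{(t-1)}M_\ell^{(t-1)}+\beta_1(P_\ell^{(t)})^\top G_\ell^{(t)}$ and $X_\ell^{(t+1)}=X_\ell^{(t)}-\eta P_\ell^{(t)}M_\ell^{(t)}$. If $m_\ell>n_\ell$: $M_\ell^{(t)}=(1-\beta_1)M_\ell^{(t-1)}(Q_\ell^{(t-1)})^\top Q_\ell^{(t)}+\beta_1G_\ell^{(t)}Q_\ell^{(t)}$ and $X_\ell^{(t+1)}=X_\ell^{(t)}-\eta M_\ell^{(t)}(Q_\ell^{(t)})^\top$. (At $t=0$ the term involving $M^{(-1)}=0$ vanishes.)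 Deterministic variant: $G_\ell^{(t)}=\nabla_\ell f(x^{(t)})$ for all $t$, with GaLore projections. *)

theory Defs
  imports Complex_Main
begin

text \<open>Parameters x = (X_1,...,X_{N_L}) are stored as arrays indexed by (layer, row, column);
  only the entries with layer < NL, row < m l, column < n l are meaningful, all other
  entries are required to be 0.  Matrices are functions nat => nat => real with explicit
  dimensions; all sums only range over in-bound indices.\<close>

type_synonym arr = "nat \<Rightarrow> nat \<Rightarrow> nat \<Rightarrow> real"
type_synonym matr = "nat \<Rightarrow> nat \<Rightarrow> real"

definition idxs :: "nat \<Rightarrow> (nat \<Rightarrow> nat) \<Rightarrow> (nat \<Rightarrow> nat) \<Rightarrow> (nat \<times> nat \<times> nat) set" where
  "idxs NL m n = {(l, a, b). l < NL \<and> a < m l \<and> b < n l}"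

definition pspace :: "nat \<Rightarrow> (nat \<Rightarrow> nat) \<Rightarrow> (nat \<Rightarrow> nat) \<Rightarrow> arr set" where
  "pspace NL m n = {x. \<forall>l a b. (l, a, b) \<notin> idxs NL m n \<longrightarrow> x l a b = 0}"

definition ip :: "nat \<Rightarrow> (nat \<Rightarrow> nat) \<Rightarrow> (nat \<Rightarrow> nat) \<Rightarrow> arr \<Rightarrow> arr \<Rightarrow> real" where
  "ip NL m n x y = (\<Sum>(l, a, b)\<in>idxs NL m n. x l a b * y l a b)"

definition l2norm :: "nat \<Rightarrow> (nat \<Rightarrow> nat) \<Rightarrow> (nat \<Rightarrow> nat) \<Rightarrow> arr \<Rightarrow> real" where
  "l2norm NL m n x = sqrt (ip NL m n x x)"

definition arr_add :: "arr \<Rightarrow> arr \<Rightarrow> arr" where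
  "arr_add x y = (\<lambda>l a b. x l a b + y l a b)"

definition arr_diff :: "arr \<Rightarrow> arr \<Rightarrow> arr" where
  "arr_diff x y = (\<lambda>l a b. x l a b - y l a b)"

definition has_grad :: "nat \<Rightarrow> (nat \<Rightarrow> nat) \<Rightarrow> (nat \<Rightarrow> nat) \<Rightarrow> (arr \<Rightarrow> real) \<Rightarrow> arr \<Rightarrow> arr \<Rightarrow> bool" where
  "has_grad NL m n f g x \<longleftrightarrow> g \<in> pspace NL m n \<and>
     (\<forall>\<epsilon>>0. \<exists>\<rho>>0. \<forall>h\<in>pspace NL m n. 0 < l2norm NL m n h \<and> l2norm NL m n h < \<rho> \<longrightarrow>
        \<bar>f (arr_add x h) - f x - ip NL m n g h\<bar> \<le> \<epsilon> * l2norm NL m n h)"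

definition is_svd :: "nat \<Rightarrow> nat \<Rightarrow> matr \<Rightarrow> matr \<Rightarrow> matr \<Rightarrow> matr \<Rightarrow> bool" where
  "is_svd mm nn G U S V \<longleftrightarrow>
     (\<forall>i<mm. \<forall>j<mm. (\<Sum>k<mm. U k i * U k j) = (if i = j then 1 else 0)) \<and>
     (\<forall>i<nn. \<forall>j<nn. (\<Sum>k<nn. V k i * V k j) = (if i = j then 1 else 0)) \<and>
     (\<forall>i<mm. \<forall>j<nn. i \<noteq> j \<longrightarrow> S i j = 0) \<and>
     (\<forall>i<min mm nn. 0 \<le> S i i) \<and>
     (\<forall>i j. i \<le> j \<and> j < min mm nn \<longrightarrow> S j j \<le> S i i) \<and>
     (\<forall>a<mm. \<forall>b<nn. G a b = (\<Sum>i<mm. \<Sum>j<nn. U a i * S i j * V b j))"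

definition layer :: "arr \<Rightarrow> nat \<Rightarrow> matr" where
  "layer g l = (\<lambda>a b. g l a b)"

text \<open>Deterministic GaLore with MSGD and momentum projection (MP).
  x t: iterates; P t l, Q t l: projection matrices; M t l: momentum; grad: gradient map.\<close>
definition galore_det_mp ::
  "nat \<Rightarrow> (nat \<Rightarrow> nat) \<Rightarrow> (nat \<Rightarrow> nat) \<Rightarrow> (nat \<Rightarrow> nat) \<Rightarrow> (arr \<Rightarrow> arr) \<Rightarrow>
   real \<Rightarrow> nat \<Rightarrow> real \<Rightarrow>
   (nat \<Rightarrow> arr) \<Rightarrow> (nat \<Rightarrow> nat \<Rightarrow> matr) \<Rightarrow> (nat \<Rightarrow> nat \<Rightarrow> matr) \<Rightarrow> (nat \<Rightarrow> nat \<Rightarrow> matr) \<Rightarrow> bool" where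
  "galore_det_mp NL m n r grad \<eta> \<tau> \<beta> x P Q M \<longleftrightarrow>
    (\<forall>t. x t \<in> pspace NL m n) \<and>
    (\<forall>t. \<forall>l<NL. let G = layer (grad (x t)) l in
       (if t mod \<tau> = 0 then
          (\<exists>U S V. is_svd (m l) (n l) G U S V \<and>
             (\<forall>a<m l. \<forall>i<r l. P t l a i = U a i) \<and>
             (\<forall>b<n l. \<forall>i<r l. Q t l b i = V b i))
        else
          (\<forall>a<m l. \<forall>i<r l. P t l a i = P (t - 1) l a i) \<and>
          (\<forall>b<n l. \<forall>i<r l. Q t l b i = Q (t - 1) l b i)) \<and>
       (if m l \<le> n l then
          (\<forall>i<r l. \<forall>b<n l. M t l i b =
              (if t = 0 then 0 else
                 (1 - \<beta>) * (\<Sum>p<r l. (\<Sum>a<m l. P t l a i * P (t - 1) l a p) * M (t - 1) l p b))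
              + \<beta> * (\<Sum>a<m l. P t l a i * G a b)) \<and>
          (\<forall>a<m l. \<forall>b<n l. x (Suc t) l a b = x t l a b - \<eta> * (\<Sum>i<r l. P t l a i * M t l i b))
        else
          (\<forall>a<m l. \<forall>i<r l. M t l a i =
              (if t = 0 then 0 else
                 (1 - \<beta>) * (\<Sum>j<r l. M (t - 1) l a j * (\<Sum>b<n l. Q (t - 1) l b j * Q t l b i)))
              + \<beta> * (\<Sum>b<n l. G a b * Q t l b i)) \<and>
          (\<forall>a<m l. \<forall>b<n l. x (Suc t) l a b = x t l a b - \<eta> * (\<Sum>i<r l. M t l a i * Q t l b i))))"

definition delta_min :: "nat \<Rightarrow> (nat \<Rightarrow> nat) \<Rightarrow> (nat \<Rightarrow> nat) \<Rightarrow> (nat \<Rightarrow> nat) \<Rightarrow> real" where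
  "delta_min NL m n r = Min ((\<lambda>l. real (r l) / real (min (m l) (n l))) ` {..<NL})"

end

theory Submission
  imports Defs "HOL-Analysis.L2_Norm"
begin

text \<open>With \<open>\<beta>\<^sub>1 = 1\<close> the momentum is just the projected gradient, so the method takes the
  steps \<open>x(t+1) = x(t) - \<eta> \<Pi>\<^sub>t \<nabla>f(x(t))\<close>, where \<open>\<Pi>\<^sub>t\<close> is an orthogonal projection that is
  recomputed from an SVD of the gradient every \<open>\<tau>\<close> steps. At such a restart \<open>s\<close> the projection
  keeps the top \<open>r\<^sub>l\<close> singular directions of every layer, hence at least the fraction \<open>\<delta>\<close>
  of \<open>\<parallel>\<nabla>f(x(s))\<parallel>\<^sup>2\<close>. Within a block the iterates move by at most \<open>\<eta>\<close> times the
  accumulated gradient norms, so Lipschitz continuity of \<open>\<nabla>f\<close> and \<open>L\<eta>\<tau> \<le> \<surd>\<delta>/5\<close> keep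
  the gradient below twice its value at the block start and its projection above
  \<open>3\<surd>\<delta>/7\<close> times its norm. The descent lemma then yields the decrease
  \<open>\<eta>\<delta>/8 \<parallel>\<nabla>f(x(t))\<parallel>\<^sup>2\<close> in every step; telescoping and \<open>1/\<eta> \<le> 160 L/\<delta>\<^sup>3\<^sup>/\<^sup>2\<close>
  give the rate with \<open>C = 1280\<close>.\<close>

section \<open>Euclidean structure of parameter arrays\<close>

definition arr_scale :: "real \<Rightarrow> arr \<Rightarrow> arr" where
  "arr_scale c x = (\<lambda>l a b. c * x l a b)"

lemma idxs_eq_Sigma: "idxs NL m n = (SIGMA l:{..<NL}. SIGMA a:{..<m l}. {..<n l})"
  by (auto simp: idxs_def)

lemma finite_idxs [simp]: "finite (idxs NL m n)"
  by (simp add: idxs_eq_Sigma)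

lemma ip_eq_nested_sum: "ip NL m n x y = (\<Sum>l<NL. \<Sum>a<m l. \<Sum>b<n l. x l a b * y l a b)"
  unfolding ip_def idxs_eq_Sigma by (simp add: sum.Sigma split_def)

lemma l2norm_eq_L2_set: "l2norm NL m n x = L2_set (\<lambda>(l, a, b). x l a b) (idxs NL m n)"
  unfolding l2norm_def L2_set_def ip_def by (simp add: power2_eq_square split_def)

lemma ip_self_nonneg: "0 \<le> ip NL m n x x"
  unfolding ip_def by (intro sum_nonneg) (simp add: case_prod_beta)

lemma l2norm_nonneg [simp]: "0 \<le> l2norm NL m n x"
  by (simp add: l2norm_def ip_self_nonneg)

lemma l2norm_power2: "(l2norm NL m n x)\<^sup>2 = ip NL m n x x"
  by (simp add: l2norm_def ip_self_nonneg)

lemma ip_diff_left: "ip NL m n (arr_diff x y) z = ip NL m n x z - ip NL m n y z"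
  unfolding ip_def arr_diff_def by (simp add: split_def left_diff_distrib sum_subtractf)

lemma ip_scale_right: "ip NL m n x (arr_scale c y) = c * ip NL m n x y"
  unfolding ip_def arr_scale_def by (simp add: split_def sum_distrib_left mult.left_commute)

lemma ip_le_l2norm_mult: "ip NL m n x y \<le> l2norm NL m n x * l2norm NL m n y"
proof -
  have "ip NL m n x y \<le> (\<Sum>p\<in>idxs NL m n. \<bar>(\<lambda>(l, a, b). x l a b) p\<bar> * \<bar>(\<lambda>(l, a, b). y l a b) p\<bar>)"
    unfolding ip_def by (intro sum_mono) (auto simp: abs_mult[symmetric] split: prod.splits)
  also have "\<dots> \<le> l2norm NL m n x * l2norm NL m n y"
    unfolding l2norm_eq_L2_set by (rule L2_set_mult_ineq)
  finally show ?thesis .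
qed

lemma l2norm_triangle: "l2norm NL m n (arr_add x y) \<le> l2norm NL m n x + l2norm NL m n y"
  unfolding l2norm_eq_L2_set arr_add_def
  using L2_set_triangle_ineq[of "\<lambda>(l, a, b). x l a b" "\<lambda>(l, a, b). y l a b"]
  by (simp add: split_def)

lemma l2norm_diff_triangle:
  "l2norm NL m n (arr_diff x z) \<le> l2norm NL m n (arr_diff x y) + l2norm NL m n (arr_diff y z)"
proof -
  have "arr_diff x z = arr_add (arr_diff x y) (arr_diff y z)"
    by (simp add: arr_diff_def arr_add_def)
  then show ?thesis by (metis l2norm_triangle)
qed

lemma l2norm_le_add_diff: "l2norm NL m n x \<le> l2norm NL m n y + l2norm NL m n (arr_diff x y)"
proof -
  have "x = arr_add y (arr_diff x y)" by (simp add: arr_diff_def arr_add_def)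
  then show ?thesis by (metis l2norm_triangle)
qed

lemma l2norm_scale: "l2norm NL m n (arr_scale c x) = \<bar>c\<bar> * l2norm NL m n x"
proof -
  have "ip NL m n (arr_scale c x) (arr_scale c x) = c\<^sup>2 * ip NL m n x x"
    unfolding ip_def arr_scale_def by (simp add: split_def sum_distrib_left power2_eq_square mult_ac)
  then show ?thesis unfolding l2norm_def by (simp add: real_sqrt_mult)
qed

lemma l2norm_diff_commute: "l2norm NL m n (arr_diff x y) = l2norm NL m n (arr_diff y x)"
proof -
  have "arr_diff x y = arr_scale (-1) (arr_diff y x)" by (simp add: arr_diff_def arr_scale_def)
  then show ?thesis by (simp add: l2norm_scale)
qed

lemma l2norm_diff_self [simp]: "l2norm NL m n (arr_diff y y) = 0"
  by (simp add: l2norm_def ip_def arr_diff_def)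

lemma pspace_diff: "x \<in> pspace NL m n \<Longrightarrow> y \<in> pspace NL m n \<Longrightarrow> arr_diff x y \<in> pspace NL m n"
  by (simp add: pspace_def arr_diff_def)

lemma pspace_add: "x \<in> pspace NL m n \<Longrightarrow> y \<in> pspace NL m n \<Longrightarrow> arr_add x y \<in> pspace NL m n"
  by (simp add: pspace_def arr_add_def)

lemma pspace_scale: "x \<in> pspace NL m n \<Longrightarrow> arr_scale c x \<in> pspace NL m n"
  by (simp add: pspace_def arr_scale_def)

lemma l2norm_eq_0_pspace:
  assumes "x \<in> pspace NL m n" "l2norm NL m n x = 0"
  shows "x = (\<lambda>l a b. 0)"
proof (intro ext)
  fix l a b
  show "x l a b = 0"
  proof (cases "(l, a, b) \<in> idxs NL m n")
    case True
    have "\<forall>p\<in>idxs NL m n. (\<lambda>(l, a, b). x l a b) p = 0"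
      using assms(2) unfolding l2norm_eq_L2_set by (subst (asm) L2_set_eq_0_iff) auto
    with True show ?thesis by fastforce
  next
    case False
    with assms(1) show ?thesis by (simp add: pspace_def)
  qed
qed

section \<open>Smoothness\<close>

lemma has_grad_line_derivative:
  assumes grad: "\<forall>y\<in>pspace NL m n. has_grad NL m n f (grad y) y"
    and x: "x \<in> pspace NL m n" and h: "h \<in> pspace NL m n"
  shows "((\<lambda>s. f (arr_add x (arr_scale s h))) has_real_derivative
           ip NL m n (grad (arr_add x (arr_scale s h))) h) (at s)"
proof (cases "l2norm NL m n h = 0")
  case True
  then have h0: "h = (\<lambda>l a b. 0)" using l2norm_eq_0_pspace[OF h] by simp
  then have "\<And>s. arr_add x (arr_scale s h) = x" by (simp add: arr_add_def arr_scale_def)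
  moreover have "ip NL m n (grad x) h = 0" by (simp add: h0 ip_def)
  ultimately show ?thesis by simp
next
  case False
  define N where "N = l2norm NL m n h"
  have N: "0 < N" using False l2norm_nonneg[of NL m n h] unfolding N_def by linarith
  define z where "z = arr_add x (arr_scale s h)"
  have z: "z \<in> pspace NL m n" unfolding z_def by (intro pspace_add pspace_scale x h)
  define c where "c = ip NL m n (grad z) h"
  have shift: "\<And>y. arr_add x (arr_scale y h) = arr_add z (arr_scale (y - s) h)"
    by (simp add: z_def arr_add_def arr_scale_def fun_eq_iff algebra_simps)
  show ?thesis
    unfolding has_field_derivative_iff LIM_eq z_def[symmetric] c_def[symmetric]
  proof (intro allI impI)
    fix e :: real assume e: "0 < e"
    obtain \<rho> where \<rho>: "0 < \<rho>" and approx: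
      "\<forall>h'\<in>pspace NL m n. 0 < l2norm NL m n h' \<and> l2norm NL m n h' < \<rho> \<longrightarrow>
         \<bar>f (arr_add z h') - f z - ip NL m n (grad z) h'\<bar> \<le> e / (2 * N) * l2norm NL m n h'"
      using grad z e N unfolding has_grad_def by (metis divide_pos_pos mult_pos_pos zero_less_numeral)
    show "\<exists>d>0. \<forall>y. y \<noteq> s \<and> norm (y - s) < d \<longrightarrow>
        norm ((f (arr_add x (arr_scale y h)) - f z) / (y - s) - c) < e"
    proof (intro exI[of _ "\<rho> / N"] conjI allI impI)
      show "0 < \<rho> / N" using \<rho> N by simp
      fix y assume y: "y \<noteq> s \<and> norm (y - s) < \<rho> / N"
      define d where "d = y - s"
      have d: "d \<noteq> 0" "\<bar>d\<bar> * N < \<rho>" using y N by (auto simp: d_def pos_less_divide_eq)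
      have "l2norm NL m n (arr_scale d h) = \<bar>d\<bar> * N" by (simp add: l2norm_scale N_def)
      with d N approx pspace_scale[OF h, of d]
      have "\<bar>f (arr_add z (arr_scale d h)) - f z - ip NL m n (grad z) (arr_scale d h)\<bar> \<le> e / (2 * N) * (\<bar>d\<bar> * N)"
        by auto
      then have bound: "\<bar>f (arr_add x (arr_scale y h)) - f z - d * c\<bar> \<le> e / 2 * \<bar>d\<bar>"
        using N by (simp add: shift d_def[symmetric] ip_scale_right c_def)
      have "\<bar>(f (arr_add x (arr_scale y h)) - f z) / d - c\<bar> = \<bar>f (arr_add x (arr_scale y h)) - f z - d * c\<bar> / \<bar>d\<bar>"
        using d by (simp add: diff_divide_distrib abs_divide[symmetric])
      also have "\<dots> \<le> e / 2" using bound d by (simp add: divide_le_eq)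
      also have "\<dots> < e" using e by simp
      finally show "norm ((f (arr_add x (arr_scale y h)) - f z) / (y - s) - c) < e" by (simp add: d_def)
    qed
  qed
qed

lemma descent_lemma:
  assumes grad: "\<forall>y\<in>pspace NL m n. has_grad NL m n f (grad y) y"
    and lip: "\<forall>y\<in>pspace NL m n. \<forall>z\<in>pspace NL m n.
        l2norm NL m n (arr_diff (grad y) (grad z)) \<le> L * l2norm NL m n (arr_diff y z)"
    and x: "x \<in> pspace NL m n" and y: "y \<in> pspace NL m n"
  shows "f y \<le> f x + ip NL m n (grad x) (arr_diff y x) + L / 2 * (l2norm NL m n (arr_diff y x))\<^sup>2"
proof -
  define h where "h = arr_diff y x"
  have h: "h \<in> pspace NL m n" unfolding h_def by (rule pspace_diff[OF y x])
  define N where "N = l2norm NL m n h"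
  define c where "c = ip NL m n (grad x) h"
  define \<psi> where "\<psi> = (\<lambda>s. f (arr_add x (arr_scale s h)) - s * c - L / 2 * s\<^sup>2 * N\<^sup>2)"
  have "\<psi> 1 \<le> \<psi> 0"
  proof (rule DERIV_nonpos_imp_nonincreasing[of 0 1 \<psi>])
    fix s :: real assume s: "0 \<le> s" "s \<le> 1"
    define z where "z = arr_add x (arr_scale s h)"
    have z: "z \<in> pspace NL m n" unfolding z_def by (intro pspace_add pspace_scale x h)
    have D: "(\<psi> has_real_derivative ip NL m n (grad z) h - c - L * s * N\<^sup>2) (at s)"
      unfolding \<psi>_def z_def
      by (auto intro!: derivative_eq_intros has_grad_line_derivative[OF grad x h] simp: power2_eq_square)
    have "arr_diff z x = arr_scale s h" by (simp add: z_def arr_diff_def arr_add_def arr_scale_def)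
    then have "l2norm NL m n (arr_diff z x) = s * N" using s by (simp add: l2norm_scale N_def)
    have "ip NL m n (grad z) h - c = ip NL m n (arr_diff (grad z) (grad x)) h"
      by (simp add: c_def ip_diff_left)
    also have "\<dots> \<le> l2norm NL m n (arr_diff (grad z) (grad x)) * N"
      unfolding N_def by (rule ip_le_l2norm_mult)
    also have "\<dots> \<le> L * l2norm NL m n (arr_diff z x) * N"
      using lip z x N_def by (intro mult_right_mono) auto
    also have "\<dots> = L * s * N\<^sup>2" by (simp add: \<open>l2norm NL m n (arr_diff z x) = s * N\<close> power2_eq_square)
    finally show "\<exists>y. (\<psi> has_real_derivative y) (at s) \<and> y \<le> 0" using D by auto
  qed simp
  moreover have "arr_add x (arr_scale 1 h) = y" "arr_add x (arr_scale 0 h) = x"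
    by (simp_all add: h_def arr_add_def arr_diff_def arr_scale_def)
  ultimately show ?thesis by (simp add: \<psi>_def c_def N_def h_def)
qed

lemma lipschitz_const_nonneg:
  assumes "0 < NL" "0 < m 0" "0 < n 0"
    and lip: "\<forall>y\<in>pspace NL m n. \<forall>z\<in>pspace NL m n.
        l2norm NL m n (arr_diff (grad y) (grad z)) \<le> L * l2norm NL m n (arr_diff y z)"
  shows "0 \<le> L"
proof (rule ccontr)
  assume "\<not> 0 \<le> L"
  define e :: arr where "e = (\<lambda>l a b. if l = 0 \<and> a = 0 \<and> b = 0 then 1 else 0)"
  define z :: arr where "z = (\<lambda>l a b. 0)"
  have e: "e \<in> pspace NL m n" and z: "z \<in> pspace NL m n"
    using assms by (auto simp: e_def z_def pspace_def idxs_def)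
  have "arr_diff e z = e" by (simp add: z_def arr_diff_def)
  moreover have "l2norm NL m n e \<noteq> 0"
  proof
    assume "l2norm NL m n e = 0"
    then have "e 0 0 0 = 0" using l2norm_eq_0_pspace[OF e] by simp
    then show False by (simp add: e_def)
  qed
  ultimately have "0 < l2norm NL m n (arr_diff e z)"
    using l2norm_nonneg[of NL m n e] by (simp add: less_le)
  then have "L * l2norm NL m n (arr_diff e z) < 0" using \<open>\<not> 0 \<le> L\<close> by (simp add: mult_neg_pos)
  moreover have "l2norm NL m n (arr_diff (grad e) (grad z)) \<le> L * l2norm NL m n (arr_diff e z)"
    using lip e z by blast
  ultimately show False using l2norm_nonneg[of NL m n "arr_diff (grad e) (grad z)"] by linarith
qed

text \<open>Without curvature the descent lemma makes \<open>f\<close> unbounded below along \<open>-\<nabla>f(y)\<close>.\<close>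

lemma grad_eq_0_if_lipschitz_const_nonpos:
  assumes grad: "\<forall>y\<in>pspace NL m n. has_grad NL m n f (grad y) y"
    and lip: "\<forall>y\<in>pspace NL m n. \<forall>z\<in>pspace NL m n.
        l2norm NL m n (arr_diff (grad y) (grad z)) \<le> L * l2norm NL m n (arr_diff y z)"
    and bdd: "bdd_below (f ` pspace NL m n)" and "L \<le> 0" and y: "y \<in> pspace NL m n"
  shows "l2norm NL m n (grad y) = 0"
proof (rule ccontr)
  define G where "G = grad y"
  define N where "N = l2norm NL m n G"
  assume "l2norm NL m n (grad y) \<noteq> 0"
  then have N: "0 < N" using l2norm_nonneg[of NL m n G] unfolding N_def G_def by linarith
  define I where "I = Inf (f ` pspace NL m n)"
  define s where "s = (f y - I + 1) / N\<^sup>2"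
  define y' where "y' = arr_diff y (arr_scale s G)"
  have G: "G \<in> pspace NL m n" using grad y unfolding G_def has_grad_def by blast
  have y': "y' \<in> pspace NL m n" unfolding y'_def using y G by (intro pspace_diff pspace_scale)
  have step: "arr_diff y' y = arr_scale (- s) G" by (simp add: y'_def arr_diff_def arr_scale_def)
  have "f y' \<le> f y + ip NL m n (grad y) (arr_diff y' y) + L / 2 * (l2norm NL m n (arr_diff y' y))\<^sup>2"
    by (rule descent_lemma[OF grad lip y y'])
  also have "\<dots> = f y - s * N\<^sup>2 + L / 2 * (s * N)\<^sup>2"
    by (simp add: step ip_scale_right l2norm_scale G_def[symmetric] N_def l2norm_power2 power_mult_distrib)
  also have "\<dots> \<le> f y - s * N\<^sup>2"
    using \<open>L \<le> 0\<close> by (simp add: mult_nonpos_nonneg)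
  also have "\<dots> = I - 1" using N by (simp add: s_def)
  finally have "f y' \<le> I - 1" .
  moreover have "I \<le> f y'" unfolding I_def using bdd y' by (intro cInf_lower) auto
  ultimately show False by simp
qed

section \<open>Orthonormal columns and the singular value decomposition\<close>

definition orthonormal_cols :: "nat \<Rightarrow> nat \<Rightarrow> matr \<Rightarrow> bool" where
  "orthonormal_cols mm r P \<longleftrightarrow>
     (\<forall>i<r. \<forall>j<r. (\<Sum>a<mm. P a i * P a j) = (if i = j then 1 else 0))"

lemma orthonormal_cols_sum_power2:
  assumes "orthonormal_cols mm r P"
  shows "(\<Sum>a<mm. (\<Sum>i<r. P a i * c i)\<^sup>2) = (\<Sum>i<r. (c i)\<^sup>2)"
proof -
  have "(\<Sum>a<mm. (\<Sum>i<r. P a i * c i)\<^sup>2) = (\<Sum>i<r. \<Sum>j<r. c i * c j * (\<Sum>a<mm. P a i * P a j))"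
    by (simp add: power2_eq_square sum_product sum_distrib_left sum.swap[of _ "{..<mm}"] algebra_simps)
  also have "\<dots> = (\<Sum>i<r. \<Sum>j<r. c i * c j * (if i = j then 1 else 0))"
    using assms unfolding orthonormal_cols_def by (intro sum.cong refl) auto
  also have "\<dots> = (\<Sum>i<r. (c i)\<^sup>2)"
    by (simp add: power2_eq_square if_distrib cong: if_cong)
  finally show ?thesis .
qed

lemma orthonormal_cols_coeff:
  assumes "orthonormal_cols mm r P" "i < r"
  shows "(\<Sum>a<mm. P a i * (\<Sum>k<r. P a k * c k)) = c i"
proof -
  have "(\<Sum>a<mm. P a i * (\<Sum>k<r. P a k * c k)) = (\<Sum>k<r. c k * (\<Sum>a<mm. P a i * P a k))"
    by (simp add: sum_distrib_left sum_distrib_right sum.swap[of _ "{..<mm}"] algebra_simps)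
  also have "\<dots> = (\<Sum>k<r. c k * (if i = k then 1 else 0))"
    using assms unfolding orthonormal_cols_def by (intro sum.cong refl) auto
  also have "\<dots> = c i" using assms(2) by (simp add: if_distrib cong: if_cong)
  finally show ?thesis .
qed

lemma orthonormal_cols_mono: "orthonormal_cols mm r P \<Longrightarrow> k \<le> r \<Longrightarrow> orthonormal_cols mm k P"
  unfolding orthonormal_cols_def by auto

lemma orthonormal_cols_cong:
  "orthonormal_cols mm r P \<Longrightarrow> \<forall>a<mm. \<forall>i<r. P' a i = P a i \<Longrightarrow> orthonormal_cols mm r P'"
  unfolding orthonormal_cols_def by auto

lemma svd_orthonormal_left: "is_svd mm nn G U S V \<Longrightarrow> orthonormal_cols mm mm U"
  unfolding is_svd_def orthonormal_cols_def by auto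

lemma svd_orthonormal_right: "is_svd mm nn G U S V \<Longrightarrow> orthonormal_cols nn nn V"
  unfolding is_svd_def orthonormal_cols_def by auto

lemma svd_truncation_orthonormal:
  assumes "is_svd mm nn G U S V" "r \<le> min mm nn"
    and "\<forall>a<mm. \<forall>i<r. P a i = U a i" "\<forall>b<nn. \<forall>i<r. Q b i = V b i"
  shows "orthonormal_cols mm r P" "orthonormal_cols nn r Q"
  using assms orthonormal_cols_cong orthonormal_cols_mono svd_orthonormal_left svd_orthonormal_right
  by (metis min.boundedE)+

lemma svd_expansion:
  assumes "is_svd mm nn G U S V" "a < mm" "b < nn"
  shows "G a b = (\<Sum>i<min mm nn. U a i * (S i i * V b i))"
proof -
  have "G a b = (\<Sum>i<mm. \<Sum>j<nn. U a i * S i j * V b j)" using assms unfolding is_svd_def by auto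
  also have "\<dots> = (\<Sum>i<mm. if i < nn then U a i * (S i i * V b i) else 0)"
  proof (intro sum.cong refl)
    fix i assume "i \<in> {..<mm}"
    then have "(\<Sum>j<nn. U a i * S i j * V b j) = (\<Sum>j<nn. if j = i then U a i * S i i * V b i else 0)"
      using assms(1) unfolding is_svd_def by (intro sum.cong refl) auto
    then show "(\<Sum>j<nn. U a i * S i j * V b j) = (if i < nn then U a i * (S i i * V b i) else 0)"
      by (simp add: mult.assoc)
  qed
  also have "\<dots> = (\<Sum>i\<in>{..<mm} \<inter> {i. i < nn}. U a i * (S i i * V b i))"
    by (simp add: sum.inter_restrict)
  also have "{..<mm} \<inter> {i. i < nn} = {..<min mm nn}" by auto
  finally show ?thesis .
qed

lemma svd_frobenius_norm:
  assumes svd: "is_svd mm nn G U S V"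
  shows "(\<Sum>a<mm. \<Sum>b<nn. (G a b)\<^sup>2) = (\<Sum>i<min mm nn. (S i i)\<^sup>2)"
proof -
  let ?k = "min mm nn"
  have U: "orthonormal_cols mm ?k U"
    using orthonormal_cols_mono[OF svd_orthonormal_left[OF svd]] by simp
  have "(\<Sum>a<mm. \<Sum>b<nn. (G a b)\<^sup>2) = (\<Sum>b<nn. \<Sum>a<mm. (\<Sum>i<?k. U a i * (S i i * V b i))\<^sup>2)"
    using svd_expansion[OF svd] by (subst sum.swap) (intro sum.cong refl, simp)
  also have "\<dots> = (\<Sum>b<nn. \<Sum>i<?k. (S i i * V b i)\<^sup>2)"
    by (intro sum.cong refl orthonormal_cols_sum_power2[OF U])
  also have "\<dots> = (\<Sum>i<?k. (S i i)\<^sup>2 * (\<Sum>b<nn. V b i * V b i))"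
    by (subst sum.swap) (simp add: sum_distrib_left power2_eq_square algebra_simps)
  also have "\<dots> = (\<Sum>i<?k. (S i i)\<^sup>2)"
    using svd_orthonormal_right[OF svd] unfolding orthonormal_cols_def by (intro sum.cong refl) auto
  finally show ?thesis .
qed

lemma svd_left_coeff:
  assumes svd: "is_svd mm nn G U S V" and "i < min mm nn" "b < nn"
  shows "(\<Sum>a<mm. U a i * G a b) = S i i * V b i"
proof -
  have U: "orthonormal_cols mm (min mm nn) U"
    using orthonormal_cols_mono[OF svd_orthonormal_left[OF svd]] by simp
  have "(\<Sum>a<mm. U a i * G a b) = (\<Sum>a<mm. U a i * (\<Sum>k<min mm nn. U a k * (S k k * V b k)))"
    using svd_expansion[OF svd _ \<open>b < nn\<close>] by simp
  also have "\<dots> = S i i * V b i" by (rule orthonormal_cols_coeff[OF U \<open>i < min mm nn\<close>])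
  finally show ?thesis .
qed

lemma svd_right_coeff:
  assumes svd: "is_svd mm nn G U S V" and "i < min mm nn" "a < mm"
  shows "(\<Sum>b<nn. G a b * V b i) = U a i * S i i"
proof -
  have V: "orthonormal_cols nn (min mm nn) V"
    using orthonormal_cols_mono[OF svd_orthonormal_right[OF svd]] by simp
  have "(\<Sum>b<nn. G a b * V b i) = (\<Sum>b<nn. V b i * (\<Sum>k<min mm nn. V b k * (U a k * S k k)))"
    using svd_expansion[OF svd \<open>a < mm\<close>] by (intro sum.cong refl) (simp add: algebra_simps)
  also have "\<dots> = U a i * S i i" by (rule orthonormal_cols_coeff[OF V \<open>i < min mm nn\<close>])
  finally show ?thesis .
qed

lemma sum_top_squares_ge_average:
  fixes s :: "nat \<Rightarrow> real"
  assumes r: "0 < r" "r \<le> k"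
    and antimono: "\<forall>i j. i \<le> j \<and> j < k \<longrightarrow> s j \<le> s i" and nonneg: "\<forall>i<k. 0 \<le> s i"
  shows "real r / real k * (\<Sum>i<k. (s i)\<^sup>2) \<le> (\<Sum>i<r. (s i)\<^sup>2)"
proof -
  define c where "c = (s (r - 1))\<^sup>2"
  have head_ge: "s (r - 1) \<le> s i" if "i < r" for i using r that by (intro antimono[rule_format]) auto
  have tail_le: "s i \<le> s (r - 1)" if "r \<le> i" "i < k" for i using r that by (intro antimono[rule_format]) auto
  define X where "X = (\<Sum>i<r. (s i)\<^sup>2)"
  define Y where "Y = (\<Sum>i\<in>{r..<k}. (s i)\<^sup>2)"
  have "(\<Sum>i<r. c) \<le> X"
    unfolding X_def c_def using head_ge r nonneg by (intro sum_mono power_mono) auto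
  then have head: "real r * c \<le> X" by simp
  have "Y \<le> (\<Sum>i\<in>{r..<k}. c)"
    unfolding Y_def c_def using tail_le r nonneg by (intro sum_mono power_mono) auto
  then have tail: "Y \<le> (real k - real r) * c" using r by (simp add: of_nat_diff)
  have "{..<k} = {..<r} \<union> {r..<k}" using r by auto
  then have split: "(\<Sum>i<k. (s i)\<^sup>2) = X + Y"
    unfolding X_def Y_def by (simp add: sum.union_disjoint ivl_disj_int)
  have "real r * Y \<le> (real k - real r) * (real r * c)"
    using tail r by (auto intro: mult_left_mono)
  also have "\<dots> \<le> (real k - real r) * X" using head r by (intro mult_left_mono) auto
  finally have "real r * (X + Y) \<le> real k * X" by (simp add: algebra_simps)
  then show ?thesis using r unfolding split X_def by (simp add: field_simps)
qed

section \<open>Low-rank projections\<close>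

definition left_proj :: "nat \<Rightarrow> nat \<Rightarrow> matr \<Rightarrow> matr \<Rightarrow> matr" where
  "left_proj M R P G = (\<lambda>a b. \<Sum>i<R. P a i * (\<Sum>a'<M. P a' i * G a' b))"

definition right_proj :: "nat \<Rightarrow> nat \<Rightarrow> matr \<Rightarrow> matr \<Rightarrow> matr" where
  "right_proj N R Q G = (\<lambda>a b. \<Sum>i<R. (\<Sum>b'<N. G a b' * Q b' i) * Q b i)"

definition layer_proj :: "nat \<Rightarrow> nat \<Rightarrow> nat \<Rightarrow> matr \<Rightarrow> matr \<Rightarrow> matr \<Rightarrow> matr" where
  "layer_proj M N R P Q G = (if M \<le> N then left_proj M R P G else right_proj N R Q G)"

definition lowrank_proj ::
  "nat \<Rightarrow> (nat \<Rightarrow> nat) \<Rightarrow> (nat \<Rightarrow> nat) \<Rightarrow> (nat \<Rightarrow> nat) \<Rightarrow> (nat \<Rightarrow> matr) \<Rightarrow> (nat \<Rightarrow> matr) \<Rightarrow> arr \<Rightarrow> arr"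
where
  "lowrank_proj NL m n r P Q g = (\<lambda>l a b. if (l, a, b) \<in> idxs NL m n
     then layer_proj (m l) (n l) (r l) (P l) (Q l) (layer g l) a b else 0)"

definition orthonormal_projs ::
  "nat \<Rightarrow> (nat \<Rightarrow> nat) \<Rightarrow> (nat \<Rightarrow> nat) \<Rightarrow> (nat \<Rightarrow> nat) \<Rightarrow> (nat \<Rightarrow> matr) \<Rightarrow> (nat \<Rightarrow> matr) \<Rightarrow> bool"
where
  "orthonormal_projs NL m n r P Q \<longleftrightarrow>
     (\<forall>l<NL. orthonormal_cols (m l) (r l) (P l) \<and> orthonormal_cols (n l) (r l) (Q l))"

lemma sum_mult_left_proj:
  "(\<Sum>a<M. \<Sum>b<N. G a b * left_proj M R P G a b) = (\<Sum>i<R. \<Sum>b<N. (\<Sum>a<M. P a i * G a b)\<^sup>2)"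
proof -
  have "(\<Sum>a<M. \<Sum>b<N. G a b * left_proj M R P G a b)
      = (\<Sum>b<N. \<Sum>i<R. \<Sum>a<M. P a i * G a b * (\<Sum>a'<M. P a' i * G a' b))"
    unfolding left_proj_def
    by (subst sum.swap) (simp add: sum_distrib_left sum.swap[of _ "{..<R}"] mult_ac)
  also have "\<dots> = (\<Sum>i<R. \<Sum>b<N. (\<Sum>a<M. P a i * G a b)\<^sup>2)"
    by (subst sum.swap) (simp add: power2_eq_square sum_distrib_right)
  finally show ?thesis .
qed

lemma sum_mult_right_proj:
  "(\<Sum>a<M. \<Sum>b<N. G a b * right_proj N R Q G a b) = (\<Sum>a<M. \<Sum>i<R. (\<Sum>b<N. G a b * Q b i)\<^sup>2)"
proof (rule sum.cong[OF refl])
  fix a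
  have "(\<Sum>b<N. G a b * right_proj N R Q G a b)
      = (\<Sum>i<R. \<Sum>b<N. G a b * Q b i * (\<Sum>b'<N. G a b' * Q b' i))"
    unfolding right_proj_def by (subst sum.swap) (simp add: sum_distrib_left mult_ac)
  also have "\<dots> = (\<Sum>i<R. (\<Sum>b<N. G a b * Q b i)\<^sup>2)"
    by (simp add: power2_eq_square sum_distrib_right)
  finally show "(\<Sum>b<N. G a b * right_proj N R Q G a b) = (\<Sum>i<R. (\<Sum>b<N. G a b * Q b i)\<^sup>2)" .
qed

lemma sum_power2_left_proj:
  assumes "orthonormal_cols M R P"
  shows "(\<Sum>a<M. \<Sum>b<N. (left_proj M R P G a b)\<^sup>2) = (\<Sum>i<R. \<Sum>b<N. (\<Sum>a<M. P a i * G a b)\<^sup>2)"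
proof -
  have "(\<Sum>a<M. \<Sum>b<N. (left_proj M R P G a b)\<^sup>2)
      = (\<Sum>b<N. \<Sum>i<R. (\<Sum>a<M. P a i * G a b)\<^sup>2)"
    unfolding left_proj_def
    by (subst sum.swap) (intro sum.cong refl orthonormal_cols_sum_power2[OF assms])
  also have "\<dots> = (\<Sum>i<R. \<Sum>b<N. (\<Sum>a<M. P a i * G a b)\<^sup>2)" by (rule sum.swap)
  finally show ?thesis .
qed

lemma sum_power2_right_proj:
  assumes "orthonormal_cols N R Q"
  shows "(\<Sum>a<M. \<Sum>b<N. (right_proj N R Q G a b)\<^sup>2) = (\<Sum>a<M. \<Sum>i<R. (\<Sum>b<N. G a b * Q b i)\<^sup>2)"
proof (rule sum.cong[OF refl])
  fix a
  show "(\<Sum>b<N. (right_proj N R Q G a b)\<^sup>2) = (\<Sum>i<R. (\<Sum>b<N. G a b * Q b i)\<^sup>2)"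
    unfolding right_proj_def
    using orthonormal_cols_sum_power2[OF assms, of "\<lambda>i. \<Sum>b<N. G a b * Q b i"]
    by (simp add: mult.commute)
qed

lemma sum_power2_layer_proj:
  assumes "orthonormal_cols M R P" "orthonormal_cols N R Q"
  shows "(\<Sum>a<M. \<Sum>b<N. (layer_proj M N R P Q G a b)\<^sup>2) = (\<Sum>a<M. \<Sum>b<N. G a b * layer_proj M N R P Q G a b)"
  unfolding layer_proj_def
  by (simp add: sum_mult_left_proj sum_mult_right_proj
      sum_power2_left_proj[OF assms(1)] sum_power2_right_proj[OF assms(2)])

text \<open>Projecting onto the top \<open>R\<close> singular directions keeps \<open>\<Sigma>\<^sub>i\<^sub><\<^sub>R \<sigma>\<^sub>i\<^sup>2\<close>, at least the
  fraction \<open>R / min M N\<close> of \<open>\<parallel>G\<parallel>\<^sub>F\<^sup>2\<close> because the singular values are sorted.\<close>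

lemma layer_proj_svd_ge:
  assumes svd: "is_svd M N G U S V" and R: "0 < R" "R < min M N"
    and PU: "\<forall>a<M. \<forall>i<R. P a i = U a i" and QV: "\<forall>b<N. \<forall>i<R. Q b i = V b i"
  shows "real R / real (min M N) * (\<Sum>a<M. \<Sum>b<N. (G a b)\<^sup>2)
           \<le> (\<Sum>a<M. \<Sum>b<N. G a b * layer_proj M N R P Q G a b)"
proof -
  have kept: "(\<Sum>a<M. \<Sum>b<N. G a b * layer_proj M N R P Q G a b) = (\<Sum>i<R. (S i i)\<^sup>2)"
  proof (cases "M \<le> N")
    case True
    have "(\<Sum>a<M. \<Sum>b<N. G a b * layer_proj M N R P Q G a b) = (\<Sum>i<R. \<Sum>b<N. (S i i * V b i)\<^sup>2)"
      using True PU R by (simp add: layer_proj_def sum_mult_left_proj svd_left_coeff[OF svd])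
    also have "\<dots> = (\<Sum>i<R. (S i i)\<^sup>2 * (\<Sum>b<N. V b i * V b i))"
      by (simp add: sum_distrib_left power2_eq_square algebra_simps)
    also have "\<dots> = (\<Sum>i<R. (S i i)\<^sup>2)"
      using svd_orthonormal_right[OF svd] R unfolding orthonormal_cols_def by (intro sum.cong refl) auto
    finally show ?thesis .
  next
    case False
    have "(\<Sum>a<M. \<Sum>b<N. G a b * layer_proj M N R P Q G a b) = (\<Sum>a<M. \<Sum>i<R. (U a i * S i i)\<^sup>2)"
      using False QV R by (simp add: layer_proj_def sum_mult_right_proj svd_right_coeff[OF svd])
    also have "\<dots> = (\<Sum>i<R. (S i i)\<^sup>2 * (\<Sum>a<M. U a i * U a i))"
      by (subst sum.swap) (simp add: sum_distrib_left power2_eq_square algebra_simps)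
    also have "\<dots> = (\<Sum>i<R. (S i i)\<^sup>2)"
      using svd_orthonormal_left[OF svd] R unfolding orthonormal_cols_def by (intro sum.cong refl) auto
    finally show ?thesis .
  qed
  have "real R / real (min M N) * (\<Sum>i<min M N. (S i i)\<^sup>2) \<le> (\<Sum>i<R. (S i i)\<^sup>2)"
    using svd R unfolding is_svd_def by (intro sum_top_squares_ge_average) auto
  then show ?thesis using kept svd_frobenius_norm[OF svd] by simp
qed

lemma ip_lowrank_proj:
  "ip NL m n x (lowrank_proj NL m n r P Q g)
     = (\<Sum>l<NL. \<Sum>a<m l. \<Sum>b<n l. x l a b * layer_proj (m l) (n l) (r l) (P l) (Q l) (layer g l) a b)"
  unfolding ip_eq_nested_sum lowrank_proj_def by (simp add: idxs_def)

lemma l2norm_lowrank_proj_power2: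
  assumes "orthonormal_projs NL m n r P Q"
  shows "(l2norm NL m n (lowrank_proj NL m n r P Q g))\<^sup>2 = ip NL m n g (lowrank_proj NL m n r P Q g)"
proof -
  let ?\<Pi> = "\<lambda>l. layer_proj (m l) (n l) (r l) (P l) (Q l) (layer g l)"
  have "(l2norm NL m n (lowrank_proj NL m n r P Q g))\<^sup>2 = (\<Sum>l<NL. \<Sum>a<m l. \<Sum>b<n l. (?\<Pi> l a b)\<^sup>2)"
    unfolding l2norm_power2 by (simp add: ip_eq_nested_sum lowrank_proj_def idxs_def power2_eq_square)
  also have "\<dots> = (\<Sum>l<NL. \<Sum>a<m l. \<Sum>b<n l. layer g l a b * ?\<Pi> l a b)"
    using assms by (simp add: orthonormal_projs_def sum_power2_layer_proj)
  also have "\<dots> = ip NL m n g (lowrank_proj NL m n r P Q g)"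
    by (simp add: ip_lowrank_proj layer_def)
  finally show ?thesis .
qed

lemma l2norm_lowrank_proj_le:
  assumes "orthonormal_projs NL m n r P Q"
  shows "l2norm NL m n (lowrank_proj NL m n r P Q g) \<le> l2norm NL m n g"
proof -
  let ?p = "l2norm NL m n (lowrank_proj NL m n r P Q g)"
  have "?p * ?p \<le> l2norm NL m n g * ?p"
    using l2norm_lowrank_proj_power2[OF assms, of g] ip_le_l2norm_mult[of NL m n g]
    by (simp add: power2_eq_square)
  then show ?thesis by (cases "?p = 0") (auto simp: mult_le_cancel_right less_le)
qed

lemma lowrank_proj_diff:
  "lowrank_proj NL m n r P Q (arr_diff g h)
     = arr_diff (lowrank_proj NL m n r P Q g) (lowrank_proj NL m n r P Q h)"
  by (simp add: lowrank_proj_def layer_proj_def left_proj_def right_proj_def layer_def arr_diff_def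
      fun_eq_iff right_diff_distrib left_diff_distrib sum_subtractf)

lemma lowrank_proj_cong:
  assumes "\<forall>l<NL. \<forall>a<m l. \<forall>i<r l. P l a i = P' l a i"
    and "\<forall>l<NL. \<forall>b<n l. \<forall>i<r l. Q l b i = Q' l b i"
  shows "lowrank_proj NL m n r P Q = lowrank_proj NL m n r P' Q'"
  using assms
  by (auto simp: fun_eq_iff lowrank_proj_def layer_proj_def left_proj_def right_proj_def idxs_def
      intro!: sum.cong)

lemma lowrank_proj_svd_ge:
  assumes r: "\<forall>l<NL. 0 < r l \<and> r l < min (m l) (n l)"
    and \<delta>: "\<forall>l<NL. \<delta> \<le> real (r l) / real (min (m l) (n l))"
    and svd: "\<forall>l<NL. \<exists>U S V. is_svd (m l) (n l) (layer g l) U S V \<and>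
       (\<forall>a<m l. \<forall>i<r l. P l a i = U a i) \<and> (\<forall>b<n l. \<forall>i<r l. Q l b i = V b i)"
  shows "\<delta> * (l2norm NL m n g)\<^sup>2 \<le> ip NL m n g (lowrank_proj NL m n r P Q g)"
proof -
  have "\<delta> * (\<Sum>a<m l. \<Sum>b<n l. (layer g l a b)\<^sup>2)
          \<le> (\<Sum>a<m l. \<Sum>b<n l. layer g l a b * layer_proj (m l) (n l) (r l) (P l) (Q l) (layer g l) a b)"
    if l: "l < NL" for l
  proof -
    obtain U S V where "is_svd (m l) (n l) (layer g l) U S V"
      and "\<forall>a<m l. \<forall>i<r l. P l a i = U a i" "\<forall>b<n l. \<forall>i<r l. Q l b i = V b i"
      using svd l by blast
    note kept = layer_proj_svd_ge[OF this(1) _ _ this(2,3)]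
    have "0 \<le> (\<Sum>a<m l. \<Sum>b<n l. (layer g l a b)\<^sup>2)" by (intro sum_nonneg) auto
    then show ?thesis using kept \<delta> r l by (meson mult_right_mono order_trans)
  qed
  then have "(\<Sum>l<NL. \<delta> * (\<Sum>a<m l. \<Sum>b<n l. (layer g l a b)\<^sup>2)) \<le> ip NL m n g (lowrank_proj NL m n r P Q g)"
    unfolding ip_lowrank_proj by (intro sum_mono) (simp add: layer_def)
  moreover have "\<delta> * (l2norm NL m n g)\<^sup>2 = (\<Sum>l<NL. \<delta> * (\<Sum>a<m l. \<Sum>b<n l. (layer g l a b)\<^sup>2))"
    unfolding l2norm_power2 by (simp add: ip_eq_nested_sum sum_distrib_left layer_def power2_eq_square)
  ultimately show ?thesis by simp
qed

section \<open>The deterministic GaLore iteration\<close>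

lemma galore_restart_svd:
  assumes "galore_det_mp NL m n r grad \<eta> \<tau> \<beta> x P Q M" "t mod \<tau> = 0"
  shows "\<forall>l<NL. \<exists>U S V. is_svd (m l) (n l) (layer (grad (x t)) l) U S V \<and>
           (\<forall>a<m l. \<forall>i<r l. P t l a i = U a i) \<and> (\<forall>b<n l. \<forall>i<r l. Q t l b i = V b i)"
  using assms unfolding galore_det_mp_def Let_def by auto

lemma galore_keep_proj:
  assumes "galore_det_mp NL m n r grad \<eta> \<tau> \<beta> x P Q M" "l < NL" "t mod \<tau> \<noteq> 0"
  shows "\<forall>a<m l. \<forall>i<r l. P t l a i = P (t - 1) l a i" "\<forall>b<n l. \<forall>i<r l. Q t l b i = Q (t - 1) l b i"
  using assms unfolding galore_det_mp_def Let_def by auto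

text \<open>With \<open>\<beta>\<^sub>1 = 1\<close> the projected old momentum is multiplied by \<open>0\<close>, so the momentum
  is \<open>P\<^sup>T G\<close> (resp. \<open>G Q\<close>) and the step is a projected gradient step.\<close>

lemma galore_update:
  assumes g: "galore_det_mp NL m n r grad \<eta> \<tau> 1 x P Q M"
  shows "x (Suc t) = arr_diff (x t) (arr_scale \<eta> (lowrank_proj NL m n r (P t) (Q t) (grad (x t))))"
proof (intro ext)
  fix l a b
  show "x (Suc t) l a b = arr_diff (x t) (arr_scale \<eta> (lowrank_proj NL m n r (P t) (Q t) (grad (x t)))) l a b"
  proof (cases "(l, a, b) \<in> idxs NL m n")
    case True
    then have l: "l < NL" and ab: "a < m l" "b < n l" by (auto simp: idxs_def)
    have step: "if m l \<le> n l then
        (\<forall>i<r l. \<forall>b<n l. M t l i b = (\<Sum>a<m l. P t l a i * grad (x t) l a b)) \<and>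
        (\<forall>a<m l. \<forall>b<n l. x (Suc t) l a b = x t l a b - \<eta> * (\<Sum>i<r l. P t l a i * M t l i b))
      else
        (\<forall>a<m l. \<forall>i<r l. M t l a i = (\<Sum>b<n l. grad (x t) l a b * Q t l b i)) \<and>
        (\<forall>a<m l. \<forall>b<n l. x (Suc t) l a b = x t l a b - \<eta> * (\<Sum>i<r l. M t l a i * Q t l b i))"
      using g[unfolded galore_det_mp_def Let_def layer_def, THEN conjunct2, rule_format, where t = t, OF l]
      by simp
    show ?thesis
      using step True ab
      by (cases "m l \<le> n l")
        (auto simp: arr_diff_def arr_scale_def lowrank_proj_def layer_proj_def left_proj_def
          right_proj_def layer_def intro!: sum.cong)
  next
    case False
    moreover have "x t \<in> pspace NL m n" "x (Suc t) \<in> pspace NL m n"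
      using g unfolding galore_det_mp_def by auto
    ultimately show ?thesis by (simp add: pspace_def arr_diff_def arr_scale_def lowrank_proj_def)
  qed
qed

lemma galore_orthonormal_projs:
  assumes g: "galore_det_mp NL m n r grad \<eta> \<tau> \<beta> x P Q M" and r: "\<forall>l<NL. r l < min (m l) (n l)"
  shows "orthonormal_projs NL m n r (P t) (Q t)"
proof (induction t)
  case 0
  show ?case
    using galore_restart_svd[OF g, of 0] r svd_truncation_orthonormal
    unfolding orthonormal_projs_def by (metis less_imp_le_nat mod_0)
next
  case (Suc t)
  show ?case
  proof (cases "Suc t mod \<tau> = 0")
    case True
    then show ?thesis
      using galore_restart_svd[OF g True] r svd_truncation_orthonormal
      unfolding orthonormal_projs_def by (metis less_imp_le_nat)
  next
    case False
    then show ?thesis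
      using Suc galore_keep_proj[OF g _ False] orthonormal_cols_cong
      unfolding orthonormal_projs_def by (metis diff_Suc_1)
  qed
qed

lemma galore_proj_eq_block_start:
  assumes g: "galore_det_mp NL m n r grad \<eta> \<tau> \<beta> x P Q M" and "0 < \<tau>"
  shows "lowrank_proj NL m n r (P t) (Q t) = lowrank_proj NL m n r (P (t - t mod \<tau>)) (Q (t - t mod \<tau>))"
proof (induction t)
  case (Suc t)
  show ?case
  proof (cases "Suc t mod \<tau> = 0")
    case False
    have "lowrank_proj NL m n r (P (Suc t)) (Q (Suc t)) = lowrank_proj NL m n r (P t) (Q t)"
      using galore_keep_proj[OF g _ False] by (intro lowrank_proj_cong) auto
    moreover have "Suc t - Suc t mod \<tau> = t - t mod \<tau>"
      using False \<open>0 < \<tau>\<close> by (simp add: mod_Suc split: if_splits)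
    ultimately show ?thesis using Suc by simp
  qed simp
qed simp

lemma block_start_eq:
  assumes "0 < (\<tau>::nat)" "t - t mod \<tau> \<le> u" "u \<le> t"
  shows "u - u mod \<tau> = t - t mod \<tau>"
proof -
  define k where "k = u - (t - t mod \<tau>)"
  have u: "u = \<tau> * (t div \<tau>) + k" using assms by (simp add: k_def minus_mod_eq_mult_div)
  have "k < \<tau>" unfolding k_def using assms mod_less_divisor[of \<tau> t] by linarith
  then show ?thesis using u by (simp add: minus_mod_eq_mult_div)
qed

text \<open>A discrete Gronwall argument: while the accumulated weight \<open>c (t - s)\<close> stays below
  \<open>1/2\<close>, the bound \<open>g u \<le> 2 g s\<close> reproduces itself along \<open>s \<le> u \<le> t\<close>.\<close>

lemma bounded_by_twice_start:
  fixes g :: "nat \<Rightarrow> real"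
  assumes nonneg: "\<forall>u. 0 \<le> g u" and "0 \<le> c"
    and growth: "\<forall>u. s \<le> u \<and> u \<le> t \<longrightarrow> g u \<le> g s + c * (\<Sum>v\<in>{s..<u}. g v)"
    and small: "2 * c * real (t - s) \<le> 1"
  shows "s \<le> u \<Longrightarrow> u \<le> t \<Longrightarrow> g u \<le> 2 * g s"
proof (induction u rule: less_induct)
  case (less u)
  have "(\<Sum>v\<in>{s..<u}. g v) \<le> (\<Sum>v\<in>{s..<u}. 2 * g s)"
    using less by (intro sum_mono) auto
  then have "c * (\<Sum>v\<in>{s..<u}. g v) \<le> c * (real (u - s) * (2 * g s))"
    using \<open>0 \<le> c\<close> by (simp add: mult_left_mono)
  also have "\<dots> \<le> 2 * c * real (t - s) * g s"
    using less \<open>0 \<le> c\<close> nonneg by (simp add: mult_left_mono mult_right_mono mult_ac)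
  also have "\<dots> \<le> g s" using small nonneg mult_right_mono[OF small, of "g s"] by simp
  finally show ?case using growth less.prems by fastforce
qed

lemma projected_norm_lower_bound:
  fixes q gs gt p S :: real
  assumes "0 \<le> q" "q \<le> 1" "0 \<le> gs"
    and "q * gs - S \<le> p" "gt \<le> gs + S" "S \<le> 2 * q / 5 * gs"
  shows "3 / 7 * q * gt \<le> p"
proof -
  have "gt \<le> 7 / 5 * gs" using assms mult_right_mono[of q 1 gs] by linarith
  then have "q * gt \<le> q * (7 / 5 * gs)" using \<open>0 \<le> q\<close> by (rule mult_left_mono)
  then show ?thesis using assms by linarith
qed

lemma sufficient_decrease:
  fixes \<eta> L q g p F F' :: real
  assumes "0 < \<eta>" "L * \<eta> \<le> 1 / 4" "0 \<le> q * g" "3 / 7 * q * g \<le> p"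
    and descent: "F' \<le> F - \<eta> * p\<^sup>2 + L * \<eta>\<^sup>2 / 2 * p\<^sup>2"
  shows "\<eta> * q\<^sup>2 / 8 * g\<^sup>2 \<le> F - F'"
proof -
  have "\<eta> * q\<^sup>2 / 8 * g\<^sup>2 \<le> \<eta> * (7 / 8) * (3 / 7 * q * g)\<^sup>2"
    using \<open>0 < \<eta>\<close> zero_le_power2[of "q * g"] by (simp add: power2_eq_square algebra_simps)
  also have "\<dots> \<le> \<eta> * (7 / 8) * p\<^sup>2"
    using assms by (intro mult_left_mono power_mono) (auto simp: mult.commute)
  also have "\<dots> \<le> \<eta> * (1 - L * \<eta> / 2) * p\<^sup>2"
    using assms by (intro mult_right_mono mult_left_mono) auto
  also have "\<dots> \<le> F - F'" using descent by (simp add: power2_eq_square algebra_simps)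
  finally show ?thesis .
qed

section \<open>Descent along the GaLore iterates\<close>

context
  fixes NL :: nat and m n r :: "nat \<Rightarrow> nat" and f :: "arr \<Rightarrow> real" and grad :: "arr \<Rightarrow> arr"
    and L \<eta> :: real and \<tau> :: nat and x :: "nat \<Rightarrow> arr" and P Q M :: "nat \<Rightarrow> nat \<Rightarrow> matr"
  assumes grad: "\<forall>y\<in>pspace NL m n. has_grad NL m n f (grad y) y"
    and lip: "\<forall>y\<in>pspace NL m n. \<forall>z\<in>pspace NL m n.
      l2norm NL m n (arr_diff (grad y) (grad z)) \<le> L * l2norm NL m n (arr_diff y z)"
    and rank: "\<forall>l<NL. 0 < r l \<and> r l < min (m l) (n l)"
    and galore: "galore_det_mp NL m n r grad \<eta> \<tau> 1 x P Q M"
begin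

lemma galore_iterate_pspace: "x t \<in> pspace NL m n"
  using galore unfolding galore_det_mp_def by auto

lemma galore_step_eq:
  "arr_diff (x (Suc t)) (x t) = arr_scale (- \<eta>) (lowrank_proj NL m n r (P t) (Q t) (grad (x t)))"
  using galore_update[OF galore] by (simp add: arr_diff_def arr_scale_def)

lemma galore_proj_le_grad:
  "l2norm NL m n (lowrank_proj NL m n r (P t) (Q t) g) \<le> l2norm NL m n g"
  using galore_orthonormal_projs[OF galore] rank by (simp add: l2norm_lowrank_proj_le)

lemma galore_descent:
  fixes t :: nat
  defines "p \<equiv> l2norm NL m n (lowrank_proj NL m n r (P t) (Q t) (grad (x t)))"
  shows "f (x (Suc t)) \<le> f (x t) - \<eta> * p\<^sup>2 + L * \<eta>\<^sup>2 / 2 * p\<^sup>2"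
proof -
  have "p\<^sup>2 = ip NL m n (grad (x t)) (lowrank_proj NL m n r (P t) (Q t) (grad (x t)))"
    unfolding p_def using galore_orthonormal_projs[OF galore] rank by (simp add: l2norm_lowrank_proj_power2)
  then show ?thesis
    using descent_lemma[OF grad lip galore_iterate_pspace[of t] galore_iterate_pspace[of "Suc t"]]
    by (simp add: galore_step_eq ip_scale_right l2norm_scale p_def[symmetric] power_mult_distrib)
qed

lemma galore_path_length:
  assumes "0 \<le> \<eta>"
  shows "l2norm NL m n (arr_diff (x (s + k)) (x s)) \<le> \<eta> * (\<Sum>v\<in>{s..<s + k}. l2norm NL m n (grad (x v)))"
proof (induction k)
  case (Suc k)
  have "l2norm NL m n (arr_diff (x (Suc (s + k))) (x (s + k))) \<le> \<eta> * l2norm NL m n (grad (x (s + k)))"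
    using \<open>0 \<le> \<eta>\<close> galore_proj_le_grad by (simp add: galore_step_eq l2norm_scale mult_left_mono)
  then show ?case
    using Suc l2norm_diff_triangle[of NL m n "x (Suc (s + k))" "x s" "x (s + k)"]
    by (simp add: algebra_simps)
qed simp

text \<open>Inside a block the projection is the one computed at the block start \<open>s\<close>, so both the
  gradient and its projection differ from their values at \<open>s\<close> by at most \<open>L \<parallel>x\<^sub>t - x\<^sub>s\<parallel>\<close>.\<close>

lemma galore_block_estimates:
  fixes t :: nat and \<delta> :: real
  assumes "0 < \<tau>" "0 \<le> \<eta>" "0 \<le> L" "0 \<le> \<delta>"
    and \<delta>: "\<forall>l<NL. \<delta> \<le> real (r l) / real (min (m l) (n l))"
  defines "s \<equiv> t - t mod \<tau>" and "g \<equiv> \<lambda>u. l2norm NL m n (grad (x u))"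
    and "S \<equiv> L * \<eta> * (\<Sum>v\<in>{t - t mod \<tau>..<t}. l2norm NL m n (grad (x v)))"
  shows "sqrt \<delta> * g s - S \<le> l2norm NL m n (lowrank_proj NL m n r (P t) (Q t) (grad (x t)))"
    and "g t \<le> g s + S"
proof -
  let ?\<Pi> = "lowrank_proj NL m n r (P s) (Q s)"
  have \<Pi>: "lowrank_proj NL m n r (P t) (Q t) = ?\<Pi>"
    unfolding s_def by (rule galore_proj_eq_block_start[OF galore \<open>0 < \<tau>\<close>])
  have "l2norm NL m n (arr_diff (x t) (x s)) \<le> \<eta> * (\<Sum>v\<in>{s..<t}. l2norm NL m n (grad (x v)))"
    using galore_path_length[OF \<open>0 \<le> \<eta>\<close>, of s "t - s"] by (simp add: s_def)
  then have "L * l2norm NL m n (arr_diff (x t) (x s)) \<le> S"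
    unfolding S_def s_def[symmetric] using \<open>0 \<le> L\<close> by (simp add: mult_left_mono mult.assoc)
  moreover have "l2norm NL m n (arr_diff (grad (x t)) (grad (x s))) \<le> L * l2norm NL m n (arr_diff (x t) (x s))"
    using lip galore_iterate_pspace by blast
  ultimately have dist: "l2norm NL m n (arr_diff (grad (x t)) (grad (x s))) \<le> S" by linarith
  have "s mod \<tau> = 0" unfolding s_def by (simp add: minus_mod_eq_mult_div)
  then have "\<delta> * (g s)\<^sup>2 \<le> (l2norm NL m n (?\<Pi> (grad (x s))))\<^sup>2"
    unfolding g_def
    using lowrank_proj_svd_ge[OF rank \<delta> galore_restart_svd[OF galore]]
      l2norm_lowrank_proj_power2 galore_orthonormal_projs[OF galore] rank by simp
  then have "sqrt (\<delta> * (g s)\<^sup>2) \<le> sqrt ((l2norm NL m n (?\<Pi> (grad (x s))))\<^sup>2)"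
    by (rule real_sqrt_le_mono)
  then have "sqrt \<delta> * g s \<le> l2norm NL m n (?\<Pi> (grad (x s)))"
    by (simp add: real_sqrt_mult g_def)
  moreover have "l2norm NL m n (?\<Pi> (grad (x s))) \<le> l2norm NL m n (?\<Pi> (grad (x t))) + S"
    using l2norm_le_add_diff[of NL m n "?\<Pi> (grad (x s))" "?\<Pi> (grad (x t))"] dist
      galore_proj_le_grad[of s "arr_diff (grad (x s)) (grad (x t))"]
    by (simp add: lowrank_proj_diff[symmetric] l2norm_diff_commute)
  ultimately show "sqrt \<delta> * g s - S \<le> l2norm NL m n (lowrank_proj NL m n r (P t) (Q t) (grad (x t)))"
    using \<Pi> by simp
  show "g t \<le> g s + S"
    using l2norm_le_add_diff[of NL m n "grad (x t)" "grad (x s)"] dist unfolding g_def by simp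
qed

lemma galore_sufficient_decrease:
  fixes t :: nat and \<delta> :: real
  assumes "0 < \<tau>" "0 < \<eta>" "0 \<le> L" "L * \<eta> \<le> 1 / 4" "L * \<eta> * real \<tau> \<le> sqrt \<delta> / 5"
    and "0 \<le> \<delta>" "\<delta> \<le> 1" and \<delta>: "\<forall>l<NL. \<delta> \<le> real (r l) / real (min (m l) (n l))"
  shows "\<eta> * \<delta> / 8 * (l2norm NL m n (grad (x t)))\<^sup>2 \<le> f (x t) - f (x (Suc t))"
proof -
  define s where "s = t - t mod \<tau>"
  define g where "g = (\<lambda>u. l2norm NL m n (grad (x u)))"
  define S where "S = L * \<eta> * (\<Sum>v\<in>{s..<t}. g v)"
  note estimates = galore_block_estimates[OF assms(1) less_imp_le[OF assms(2)] assms(3,6) \<delta>]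
  have "t - s < \<tau>" unfolding s_def using \<open>0 < \<tau>\<close> by simp
  then have "L * \<eta> * real (t - s) \<le> L * \<eta> * real \<tau>"
    using assms(2,3) by (intro mult_left_mono) auto
  then have weight: "L * \<eta> * real (t - s) \<le> sqrt \<delta> / 5" using assms(5) by linarith
  have "sqrt \<delta> \<le> 1" using \<open>\<delta> \<le> 1\<close> by simp
  have twice: "g u \<le> 2 * g s" if "s \<le> u" "u \<le> t" for u
  proof (rule bounded_by_twice_start[of g "L * \<eta>" s t u])
    show "\<forall>u. s \<le> u \<and> u \<le> t \<longrightarrow> g u \<le> g s + L * \<eta> * (\<Sum>v\<in>{s..<u}. g v)"
    proof (intro allI impI)
      fix u assume "s \<le> u \<and> u \<le> t"
      then have "u - u mod \<tau> = s" unfolding s_def using block_start_eq[OF \<open>0 < \<tau>\<close>] by blast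
      then show "g u \<le> g s + L * \<eta> * (\<Sum>v\<in>{s..<u}. g v)" using estimates(2)[of u] by (simp add: g_def)
    qed
    show "2 * (L * \<eta>) * real (t - s) \<le> 1" using weight \<open>sqrt \<delta> \<le> 1\<close> by linarith
  qed (use that assms(2,3) in \<open>auto simp: g_def\<close>)
  have "S \<le> L * \<eta> * (\<Sum>v\<in>{s..<t}. 2 * g s)"
    unfolding S_def using twice assms(2,3) by (intro mult_left_mono sum_mono) auto
  also have "\<dots> = 2 * g s * (L * \<eta> * real (t - s))" by simp
  also have "\<dots> \<le> 2 * g s * (sqrt \<delta> / 5)" using weight by (intro mult_left_mono) (auto simp: g_def)
  finally have "S \<le> 2 * sqrt \<delta> / 5 * g s" by (simp add: mult_ac)
  then have "3 / 7 * sqrt \<delta> * g t \<le> l2norm NL m n (lowrank_proj NL m n r (P t) (Q t) (grad (x t)))"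
    using estimates[of t] \<open>0 \<le> \<delta>\<close> \<open>sqrt \<delta> \<le> 1\<close>
    by (intro projected_norm_lower_bound[where gs = "g s" and S = S]) (simp_all add: g_def S_def s_def)
  then have "\<eta> * (sqrt \<delta>)\<^sup>2 / 8 * (g t)\<^sup>2 \<le> f (x t) - f (x (Suc t))"
    using \<open>0 \<le> \<delta>\<close>
    by (intro sufficient_decrease[OF \<open>0 < \<eta>\<close> \<open>L * \<eta> \<le> 1 / 4\<close> _ _ galore_descent]) (simp_all add: g_def)
  then show ?thesis using \<open>0 \<le> \<delta>\<close> by (simp add: g_def)
qed

lemma galore_sum_bound:
  fixes \<delta> :: real
  assumes "0 < \<tau>" "0 < \<eta>" "0 \<le> L" "L * \<eta> \<le> 1 / 4" "L * \<eta> * real \<tau> \<le> sqrt \<delta> / 5"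
    and "0 \<le> \<delta>" "\<delta> \<le> 1" and "\<forall>l<NL. \<delta> \<le> real (r l) / real (min (m l) (n l))"
    and bdd: "bdd_below (f ` pspace NL m n)"
  shows "\<eta> * \<delta> / 8 * (\<Sum>t<T. (l2norm NL m n (grad (x t)))\<^sup>2) \<le> f (x 0) - Inf (f ` pspace NL m n)"
proof -
  have "(\<Sum>t<T. \<eta> * \<delta> / 8 * (l2norm NL m n (grad (x t)))\<^sup>2) \<le> (\<Sum>t<T. f (x t) - f (x (Suc t)))"
    using galore_sufficient_decrease[OF assms(1-8)] by (intro sum_mono) auto
  also have "\<dots> = f (x 0) - f (x T)" by (rule sum_lessThan_telescope')
  also have "\<dots> \<le> f (x 0) - Inf (f ` pspace NL m n)"
    using bdd galore_iterate_pspace by (simp add: cInf_lower)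
  finally show ?thesis by (simp add: sum_distrib_left)
qed

end

section \<open>The parameter choices\<close>

lemma delta_min_bounds:
  assumes "0 < NL" and rank: "\<forall>l<NL. 0 < r l \<and> r l < min (m l) (n l)"
  shows "0 < delta_min NL m n r" "delta_min NL m n r \<le> 1"
    "\<forall>l<NL. delta_min NL m n r \<le> real (r l) / real (min (m l) (n l))"
proof -
  let ?ratios = "(\<lambda>l. real (r l) / real (min (m l) (n l))) ` {..<NL}"
  have "finite ?ratios" "?ratios \<noteq> {}" using \<open>0 < NL\<close> by auto
  then have "Min ?ratios \<in> ?ratios" by (rule Min_in)
  then obtain l where "l < NL" and l: "delta_min NL m n r = real (r l) / real (min (m l) (n l))"
    unfolding delta_min_def by blast
  then show "0 < delta_min NL m n r" "delta_min NL m n r \<le> 1" using rank by auto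
  show "\<forall>l<NL. delta_min NL m n r \<le> real (r l) / real (min (m l) (n l))"
    unfolding delta_min_def using \<open>finite ?ratios\<close> by (auto intro: Min_le)
qed

lemma sqrt_le_div_sqrt:
  assumes "0 < \<delta>" "0 \<le> c" "a \<le> c\<^sup>2 / \<delta>"
  shows "sqrt a \<le> c / sqrt \<delta>"
  using assms by (intro real_le_lsqrt) (simp_all add: power_divide)

lemma stepsize_bounds:
  fixes \<delta> L :: real and \<tau> :: nat
  assumes "0 < \<delta>" "\<delta> \<le> 1" "0 < L" and \<tau>: "\<tau> = nat \<lceil>64 / (3 * \<delta>)\<rceil>"
  defines "D \<equiv> 4 * L + sqrt (80 * L\<^sup>2 / (3 * \<delta>)) + sqrt (80 * (real \<tau>)\<^sup>2 * L\<^sup>2 / (3 * \<delta>))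
                 + sqrt (16 * real \<tau> * L\<^sup>2 / 3)"
  shows "0 < \<tau>" "4 * L \<le> D" "5 * L * real \<tau> \<le> sqrt \<delta> * D" "D \<le> 160 * L / sqrt \<delta> ^ 3"
proof -
  define q where "q = sqrt \<delta>"
  have q: "0 < q" "q \<le> 1" "q\<^sup>2 = \<delta>" using assms by (auto simp: q_def)
  have "0 < 64 / (3 * \<delta>)" "64 / (3 * \<delta>) \<le> real \<tau>" using \<open>0 < \<delta>\<close> \<tau> by simp_all
  then have "0 < real \<tau>" by linarith
  then show "0 < \<tau>" by simp
  have "real \<tau> \<le> 64 / (3 * \<delta>) + 1" using \<tau> \<open>0 < \<delta>\<close> by simp
  also have "\<dots> \<le> 23 / \<delta>" using \<open>0 < \<delta>\<close> \<open>\<delta> \<le> 1\<close> by (simp add: field_simps)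
  finally have \<tau>_le: "real \<tau> \<le> 23 / \<delta>" .
  define B where "B = sqrt (80 * (real \<tau>)\<^sup>2 * L\<^sup>2 / (3 * \<delta>))"
  have A: "sqrt (80 * L\<^sup>2 / (3 * \<delta>)) \<le> 6 * L / q"
    unfolding q_def using assms by (intro sqrt_le_div_sqrt) (simp_all add: field_simps power2_eq_square)
  have "B \<le> 6 * real \<tau> * L / q"
    unfolding B_def q_def using assms by (intro sqrt_le_div_sqrt) (simp_all add: field_simps power2_eq_square)
  also have "\<dots> \<le> 6 * (23 / \<delta>) * L / q"
    using \<tau>_le assms q by (intro divide_right_mono mult_right_mono) auto
  finally have B_le: "B \<le> 138 * L / q ^ 3"
    using q by (simp add: power3_eq_cube power2_eq_square[symmetric] field_simps)
  have "16 * real \<tau> * L\<^sup>2 / 3 \<le> 16 * (23 / \<delta>) * L\<^sup>2 / 3"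
    using \<tau>_le by (intro divide_right_mono mult_left_mono mult_right_mono) auto
  also have "\<dots> \<le> (12 * L)\<^sup>2 / \<delta>" using \<open>0 < \<delta>\<close> by (simp add: field_simps power2_eq_square)
  finally have C: "sqrt (16 * real \<tau> * L\<^sup>2 / 3) \<le> 12 * L / q"
    unfolding q_def using assms by (intro sqrt_le_div_sqrt) simp_all
  have D: "D = 4 * L + sqrt (80 * L\<^sup>2 / (3 * \<delta>)) + B + sqrt (16 * real \<tau> * L\<^sup>2 / 3)"
    unfolding D_def B_def ..
  moreover have nonneg: "0 \<le> B" "0 \<le> sqrt (80 * L\<^sup>2 / (3 * \<delta>))" "0 \<le> sqrt (16 * real \<tau> * L\<^sup>2 / 3)"
    unfolding B_def using \<open>0 < \<delta>\<close> by simp_all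
  ultimately show "4 * L \<le> D" by linarith
  have "q * B = sqrt (80 / 3 * (L * real \<tau>)\<^sup>2)"
    unfolding q_def B_def using \<open>0 < \<delta>\<close>
    by (simp add: real_sqrt_mult[symmetric] field_simps power2_eq_square)
  moreover have "5 * L * real \<tau> \<le> sqrt (80 / 3 * (L * real \<tau>)\<^sup>2)"
    using \<open>0 < L\<close> by (intro real_le_rsqrt) (simp add: power2_eq_square)
  moreover have "B \<le> D" using D nonneg \<open>0 < L\<close> by linarith
  then have "q * B \<le> q * D" using q by (intro mult_left_mono) auto
  ultimately show "5 * L * real \<tau> \<le> sqrt \<delta> * D" unfolding q_def by linarith
  have q3: "0 < q ^ 3" "q ^ 3 \<le> q" "q ^ 3 \<le> 1" using q by (simp_all add: power3_eq_cube mult_le_one)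
  have "L / q \<le> L / q ^ 3" using q3 \<open>0 < L\<close> by (intro divide_left_mono) auto
  moreover have "L \<le> L / q ^ 3" using q3 \<open>0 < L\<close> by (simp add: le_divide_eq mult_left_le)
  ultimately have "D \<le> 160 * (L / q ^ 3)"
    using D A B_le C by (simp only: times_divide_eq_right[symmetric])
  then show "D \<le> 160 * L / sqrt \<delta> ^ 3" by (simp add: q_def)
qed

lemma average_bound_from_stepsize:
  fixes S \<Delta> \<delta> L D T :: real
  assumes "0 < \<delta>" "0 < D" "0 \<le> \<Delta>" "0 < T"
    and "1 / D * \<delta> / 8 * S \<le> \<Delta>" "D \<le> 160 * L / sqrt \<delta> ^ 3"
  shows "1 / T * S \<le> 1280 * (L * \<Delta> / (\<delta> powr (5 / 2) * T))"
proof -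
  have "S \<le> 8 * D / \<delta> * \<Delta>" using assms(1,2,5) by (simp add: field_simps)
  also have "\<dots> \<le> 8 * (160 * L / sqrt \<delta> ^ 3) / \<delta> * \<Delta>"
    using assms by (intro mult_right_mono divide_right_mono) auto
  also have "\<dots> = 1280 * (L * \<Delta> / sqrt \<delta> ^ 5)"
  proof -
    define q where "q = sqrt \<delta>"
    have "\<delta> = q\<^sup>2" "0 < q" using \<open>0 < \<delta>\<close> by (simp_all add: q_def)
    then show ?thesis unfolding q_def[symmetric] by (simp add: field_simps eval_nat_numeral)
  qed
  also have "sqrt \<delta> ^ 5 = \<delta> powr (5 / 2)"
    using \<open>0 < \<delta>\<close> by (simp add: powr_half_sqrt_powr real_sqrt_power)
  finally have "1 / T * S \<le> 1 / T * (1280 * (L * \<Delta> / \<delta> powr (5 / 2)))"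
    using \<open>0 < T\<close> by (intro mult_left_mono) auto
  then show ?thesis by (simp add: mult.commute)
qed

lemma galore_det_mp_rate:
  fixes \<beta>\<^sub>1 \<delta> \<eta> :: real and \<tau> :: nat
  assumes "0 < NL" and rank: "\<forall>l<NL. 0 < r l \<and> r l < min (m l) (n l)"
    and bdd: "bdd_below (f ` pspace NL m n)"
    and grad: "\<forall>y\<in>pspace NL m n. has_grad NL m n f (grad y) y"
    and lip: "\<forall>y\<in>pspace NL m n. \<forall>z\<in>pspace NL m n.
      l2norm NL m n (arr_diff (grad y) (grad z)) \<le> L * l2norm NL m n (arr_diff y z)"
    and T: "64 / (3 * \<delta>) \<le> real T" and galore: "galore_det_mp NL m n r grad \<eta> \<tau> \<beta>\<^sub>1 x P Q M"
    and \<delta>: "\<delta> = delta_min NL m n r" and \<beta>\<^sub>1: "\<beta>\<^sub>1 = 1" and \<tau>: "\<tau> = nat \<lceil>64 / (3 * \<delta> * \<beta>\<^sub>1)\<rceil>"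
    and \<eta>: "\<eta> = 1 / (4 * L + sqrt (80 * L\<^sup>2 / (3 * \<delta> * \<beta>\<^sub>1\<^sup>2)) + sqrt (80 * (real \<tau>)\<^sup>2 * L\<^sup>2 / (3 * \<delta>))
                   + sqrt (16 * real \<tau> * L\<^sup>2 / (3 * \<beta>\<^sub>1)))"
  shows "1 / real T * (\<Sum>t<T. (l2norm NL m n (grad (x t)))\<^sup>2)
           \<le> 1280 * (L * (f (x 0) - Inf (f ` pspace NL m n)) / (\<delta> powr (5 / 2) * real T))"
proof -
  note galore = galore[unfolded \<beta>\<^sub>1]
  have \<delta>_bounds: "0 < \<delta>" "\<delta> \<le> 1" "\<forall>l<NL. \<delta> \<le> real (r l) / real (min (m l) (n l))"
    unfolding \<delta> using delta_min_bounds[OF \<open>0 < NL\<close> rank] by auto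
  have "0 \<le> L" using lipschitz_const_nonneg[OF \<open>0 < NL\<close> _ _ lip] rank \<open>0 < NL\<close> by auto
  show ?thesis
  proof (cases "L = 0")
    case True
    then show ?thesis
      using grad_eq_0_if_lipschitz_const_nonpos[OF grad lip bdd] galore_iterate_pspace[OF grad lip rank galore]
      by simp
  next
    case False
    then have "0 < L" using \<open>0 \<le> L\<close> by simp
    define D where "D = 4 * L + sqrt (80 * L\<^sup>2 / (3 * \<delta>)) + sqrt (80 * (real \<tau>)\<^sup>2 * L\<^sup>2 / (3 * \<delta>))
                 + sqrt (16 * real \<tau> * L\<^sup>2 / 3)"
    have "\<tau> = nat \<lceil>64 / (3 * \<delta>)\<rceil>" using \<tau> \<beta>\<^sub>1 by simp
    note D_bounds = stepsize_bounds[OF \<delta>_bounds(1,2) \<open>0 < L\<close> this, folded D_def]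
    have "0 < D" using D_bounds \<open>0 < L\<close> by linarith
    have \<eta>_eq: "\<eta> = 1 / D" unfolding \<eta> D_def \<beta>\<^sub>1 by simp
    have "L * \<eta> \<le> 1 / 4" "L * \<eta> * real \<tau> \<le> sqrt \<delta> / 5"
      using D_bounds \<open>0 < D\<close> by (simp_all add: \<eta>_eq \<tau> \<beta>\<^sub>1 field_simps)
    then have "\<eta> * \<delta> / 8 * (\<Sum>t<T. (l2norm NL m n (grad (x t)))\<^sup>2) \<le> f (x 0) - Inf (f ` pspace NL m n)"
      using \<delta>_bounds \<open>0 < D\<close> D_bounds bdd \<open>0 < L\<close>
      by (intro galore_sum_bound[OF grad lip rank galore]) (simp_all add: \<eta>_eq \<tau> \<beta>\<^sub>1)
    moreover have "Inf (f ` pspace NL m n) \<le> f (x 0)"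
      using bdd galore_iterate_pspace[OF grad lip rank galore] by (simp add: cInf_lower)
    moreover have "0 < real T" using T \<delta>_bounds(1) by (smt (verit) divide_pos_pos)
    ultimately show ?thesis
      using T \<delta>_bounds \<open>0 < D\<close> D_bounds
      by (intro average_bound_from_stepsize) (simp_all add: \<eta>_eq)
  qed
qed

theorem theorem2:
  shows "\<exists>C::real. \<forall>(NL::nat) (m::nat \<Rightarrow> nat) (n::nat \<Rightarrow> nat) (r::nat \<Rightarrow> nat)
      (f::arr \<Rightarrow> real) (grad::arr \<Rightarrow> arr) (L::real) (T::nat)
      (x::nat \<Rightarrow> arr) (P::nat \<Rightarrow> nat \<Rightarrow> matr) (Q::nat \<Rightarrow> nat \<Rightarrow> matr) (M::nat \<Rightarrow> nat \<Rightarrow> matr).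
    let \<delta> = delta_min NL m n r;
        \<beta>\<^sub>1 = (1::real);
        \<tau> = nat \<lceil>64 / (3 * \<delta> * \<beta>\<^sub>1)\<rceil>;
        \<eta> = 1 / (4 * L + sqrt (80 * L\<^sup>2 / (3 * \<delta> * \<beta>\<^sub>1\<^sup>2))
                 + sqrt (80 * (real \<tau>)\<^sup>2 * L\<^sup>2 / (3 * \<delta>))
                 + sqrt (16 * real \<tau> * L\<^sup>2 / (3 * \<beta>\<^sub>1)));
        \<Delta> = f (x 0) - Inf (f ` pspace NL m n)
    in
    (0 < NL \<and>
     (\<forall>l<NL. 0 < r l \<and> r l < min (m l) (n l)) \<and>
     bdd_below (f ` pspace NL m n) \<and>
     (\<forall>y\<in>pspace NL m n. has_grad NL m n f (grad y) y) \<and>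
     (\<forall>y\<in>pspace NL m n. \<forall>z\<in>pspace NL m n.
        l2norm NL m n (arr_diff (grad y) (grad z)) \<le> L * l2norm NL m n (arr_diff y z)) \<and>
     0 < \<Delta> \<and>
     real T \<ge> 64 / (3 * \<delta>) \<and>
     galore_det_mp NL m n r grad \<eta> \<tau> \<beta>\<^sub>1 x P Q M)
    \<longrightarrow>
    (1 / real T) * (\<Sum>t<T. (l2norm NL m n (grad (x t)))\<^sup>2)
      \<le> C * (L * \<Delta> / (\<delta> powr (5/2) * real T))"
  unfolding Let_def
  by (intro exI[of _ 1280] allI impI, elim conjE, rule galore_det_mp_rate)
    (assumption | rule refl)+

end
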